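(* Let $\zeta\in\mathbb{T}$, and let $F\in\mathrm{GL}(n,\mathbb{C})$ be admissible with respect to $\underline{d}=(d_1,\dots,d_n)\in\mathbb{Z}^n$, $\underline{d}'\in\mathbb{Z}^n$ and $d\in\mathbb{Z}$. Then there is a unique unital $*$-homomorphism $\rho:\textup{C}(\textup{U}^+_\zeta(F))\to \textup{C}(\mathbb{T},\textup{C}(\textup{U}^+_\zeta(F)))=\textup{C}(\textup{U}^+_\zeta(F))\otimes\textup{C}(\mathbb{T})$ such that $\rho_z(u_{ij})=z^{d_j-d_i}u_{ij}$ for all $1\le i,j\le n$ and $z\in\mathbb{T}$; moreover $\rho$ satisfies $(\rho\otimes\mathrm{id})\rho=(\mathrm{id}\otimes\Delta_{\mathbb{T}})\rho$ (with $\Delta_{\mathbb{T}}(z)=z\otimes z$) and the closed linear span of $\rho(\textup{C}(\textup{U}^+_\zeta(F)))(1\otimes \textup{C}(\mathbb{T}))$ is $\textup{C}(\textup{U}^+_\zeta(F))\otimes \textup{C}(\mathbb{T})$, so that $(\textup{C}(\textup{U}^+_\zeta(F)),\rho)$ is a $\mathbb{T}$-$\textup{C}^*$-algebra.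
   Context: A matrix $F=(F_{ij})\in \mathrm{GL}(n,\mathbb{C})$ with inverse $F^{-1}=(F^{ij})$ is admissible with respect to $\underline{d}=(d_1,\dots,d_n)$, $\underline{d}'=(d'_1,\dots,d'_n)\in\mathbb{Z}^n$ and $d\in\mathbb{Z}$ if $F_{ij}=0=F^{ji}$ whenever $-d_j+d\neq d'_i$. For such $F$ and $\zeta\in\mathbb{T}$, $\textup{C}(\textup{U}^+_\zeta(F))$ is the universal unital $\textup{C}^*$-algebra generated by elements $u_{ij}$, $1\le i,j\le n$, subject to the relations making the matrices $u=(u_{ij})$ and $F\overline{u}_\zeta F^{-1}$ unitary, where $\overline{u}_\zeta=(\zeta^{d_i(d_j-d_i)}u_{ij}^* )_{1\le i,j\le n}$. For $x\in X\otimes \textup{C}(\mathbb{T})\cong \textup{C}(\mathbb{T},X)$, $x(z)$ is written $\rho_z(\cdot)$ as indicated. *)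

theory Defs
  imports "HOL-Analysis.Analysis"
begin

class cstar_algebra = real_normed_algebra_1 + banach +
  fixes scaleC :: "complex \<Rightarrow> 'a \<Rightarrow> 'a" (infixr "*\<^sub>C" 75)
    and adj :: "'a \<Rightarrow> 'a"
  assumes scaleR_scaleC: "scaleR r x = complex_of_real r *\<^sub>C x"
    and scaleC_add_right: "a *\<^sub>C (x + y) = a *\<^sub>C x + a *\<^sub>C y"
    and scaleC_add_left: "(a + b) *\<^sub>C x = a *\<^sub>C x + b *\<^sub>C x"
    and scaleC_scaleC: "a *\<^sub>C (b *\<^sub>C x) = (a * b) *\<^sub>C x"
    and scaleC_one: "1 *\<^sub>C x = x"
    and mult_scaleC_left: "(a *\<^sub>C x) * y = a *\<^sub>C (x * y)"
    and mult_scaleC_right: "x * (a *\<^sub>C y) = a *\<^sub>C (x * y)"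
    and norm_scaleC: "norm (a *\<^sub>C x) = cmod a * norm x"
    and adj_adj: "adj (adj x) = x"
    and adj_add: "adj (x + y) = adj x + adj y"
    and adj_mult: "adj (x * y) = adj y * adj x"
    and adj_scaleC: "adj (a *\<^sub>C x) = cnj a *\<^sub>C adj x"
    and cstar_identity: "norm (adj x * x) = norm x * norm x"

definition unital_star_hom :: "('a::cstar_algebra \<Rightarrow> 'b::cstar_algebra) \<Rightarrow> bool" where
  "unital_star_hom \<phi> \<longleftrightarrow>
     (\<forall>x y. \<phi> (x + y) = \<phi> x + \<phi> y) \<and>
     (\<forall>c x. \<phi> (c *\<^sub>C x) = c *\<^sub>C \<phi> x) \<and>
     (\<forall>x y. \<phi> (x * y) = \<phi> x * \<phi> y) \<and>
     (\<forall>x. \<phi> (adj x) = adj (\<phi> x)) \<and>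
     \<phi> 1 = 1"

definition unitary_mat :: "nat \<Rightarrow> (nat \<Rightarrow> nat \<Rightarrow> 'a::cstar_algebra) \<Rightarrow> bool" where
  "unitary_mat n M \<longleftrightarrow>
     (\<forall>i\<in>{1..n}. \<forall>j\<in>{1..n}.
        (\<Sum>k=1..n. adj (M k i) * M k j) = (if i = j then 1 else 0) \<and>
        (\<Sum>k=1..n. M i k * adj (M j k)) = (if i = j then 1 else 0))"

definition inverse_cmat :: "nat \<Rightarrow> (nat \<Rightarrow> nat \<Rightarrow> complex) \<Rightarrow> (nat \<Rightarrow> nat \<Rightarrow> complex) \<Rightarrow> bool" where
  "inverse_cmat n F G \<longleftrightarrow>
     (\<forall>i\<in>{1..n}. \<forall>j\<in>{1..n}.
        (\<Sum>k=1..n. F i k * G k j) = (if i = j then 1 else 0) \<and>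
        (\<Sum>k=1..n. G i k * F k j) = (if i = j then 1 else 0))"

definition admissible :: "nat \<Rightarrow> (nat \<Rightarrow> nat \<Rightarrow> complex) \<Rightarrow> (nat \<Rightarrow> nat \<Rightarrow> complex)
    \<Rightarrow> (nat \<Rightarrow> int) \<Rightarrow> (nat \<Rightarrow> int) \<Rightarrow> int \<Rightarrow> bool" where
  "admissible n F Finv d d' dd \<longleftrightarrow>
     (\<forall>i\<in>{1..n}. \<forall>j\<in>{1..n}. - d j + dd \<noteq> d' i \<longrightarrow> F i j = 0 \<and> Finv j i = 0)"

definition ubar :: "complex \<Rightarrow> (nat \<Rightarrow> int) \<Rightarrow> (nat \<Rightarrow> nat \<Rightarrow> 'a::cstar_algebra) \<Rightarrow> nat \<Rightarrow> nat \<Rightarrow> 'a" where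
  "ubar \<zeta> d u i j = (\<zeta> powi (d i * (d j - d i))) *\<^sub>C adj (u i j)"

definition conj_mat :: "nat \<Rightarrow> (nat \<Rightarrow> nat \<Rightarrow> complex) \<Rightarrow> (nat \<Rightarrow> nat \<Rightarrow> complex)
    \<Rightarrow> (nat \<Rightarrow> nat \<Rightarrow> 'a::cstar_algebra) \<Rightarrow> nat \<Rightarrow> nat \<Rightarrow> 'a" where
  "conj_mat n F Finv M i j = (\<Sum>k=1..n. \<Sum>l=1..n. (F i k * Finv l j) *\<^sub>C M k l)"

definition UF_relations :: "nat \<Rightarrow> complex \<Rightarrow> (nat \<Rightarrow> int) \<Rightarrow> (nat \<Rightarrow> nat \<Rightarrow> complex)
    \<Rightarrow> (nat \<Rightarrow> nat \<Rightarrow> complex) \<Rightarrow> (nat \<Rightarrow> nat \<Rightarrow> 'a::cstar_algebra) \<Rightarrow> bool" where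
  "UF_relations n \<zeta> d F Finv v \<longleftrightarrow>
     unitary_mat n v \<and> unitary_mat n (conj_mat n F Finv (ubar \<zeta> d v))"

inductive_set star_alg_gen :: "'a::cstar_algebra set \<Rightarrow> 'a set" for S where
  gen: "x \<in> S \<Longrightarrow> x \<in> star_alg_gen S"
| one: "1 \<in> star_alg_gen S"
| add: "x \<in> star_alg_gen S \<Longrightarrow> y \<in> star_alg_gen S \<Longrightarrow> x + y \<in> star_alg_gen S"
| mult: "x \<in> star_alg_gen S \<Longrightarrow> y \<in> star_alg_gen S \<Longrightarrow> x * y \<in> star_alg_gen S"
| scale: "x \<in> star_alg_gen S \<Longrightarrow> c *\<^sub>C x \<in> star_alg_gen S"
| adj: "x \<in> star_alg_gen S \<Longrightarrow> adj x \<in> star_alg_gen S"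

text \<open>The C*-algebra (all of type 'a) is the universal unital C*-algebra \<open>C(U^+_\<zeta>(F))\<close>
  with generators u: it is generated as a C*-algebra by the u_ij, these satisfy the relations,
  and every family satisfying the relations in a C*-algebra (of the same type) is the image of
  the u_ij under a unital *-homomorphism.\<close>
definition is_C_UplusF :: "nat \<Rightarrow> complex \<Rightarrow> (nat \<Rightarrow> int) \<Rightarrow> (nat \<Rightarrow> nat \<Rightarrow> complex)
    \<Rightarrow> (nat \<Rightarrow> nat \<Rightarrow> complex) \<Rightarrow> (nat \<Rightarrow> nat \<Rightarrow> 'a::cstar_algebra) \<Rightarrow> bool" where
  "is_C_UplusF n \<zeta> d F Finv u \<longleftrightarrow>
     closure (star_alg_gen {u i j | i j. i \<in> {1..n} \<and> j \<in> {1..n}}) = UNIV \<and>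
     UF_relations n \<zeta> d F Finv u \<and>
     (\<forall>v::nat \<Rightarrow> nat \<Rightarrow> 'a. UF_relations n \<zeta> d F Finv v \<longrightarrow>
        (\<exists>\<phi>. unital_star_hom \<phi> \<and> (\<forall>i\<in>{1..n}. \<forall>j\<in>{1..n}. \<phi> (u i j) = v i j)))"

definition circle :: "complex set" where "circle = {z. cmod z = 1}"

text \<open>A unital *-homomorphism \<open>\<rho> : A \<rightarrow> C(\<bbbT>, A)\<close>, written \<open>\<rho> a z = \<rho>_z(a)\<close>:
  the operations of \<open>C(\<bbbT>,A)\<close> are pointwise, so this means every \<open>\<rho>_z\<close> is a unital
  *-homomorphism and every \<open>\<rho>(a)\<close> is continuous on the circle.\<close>
definition hom_into_CT :: "('a::cstar_algebra \<Rightarrow> complex \<Rightarrow> 'a) \<Rightarrow> bool" where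
  "hom_into_CT \<rho> \<longleftrightarrow>
     (\<forall>z\<in>circle. unital_star_hom (\<lambda>a. \<rho> a z)) \<and> (\<forall>a. continuous_on circle (\<rho> a))"

end

theory Submission
  imports Defs "HOL-Computational_Algebra.Formal_Power_Series"
begin

(* By admissibility, z^(d_j - d_i) u_ij again satisfies the defining relations of C(U^+_zeta(F)),
   so the universal property yields unital *-homomorphisms rho_z with the prescribed values on
   the generators. Uniqueness, rho_1 = id and rho_s rho_t = rho_(st) hold because homomorphisms
   that agree on the generators agree everywhere. Since *-homomorphisms between C*-algebras are
   contractive, continuity of z |-> rho_z(a), evident on the *-algebra generated by the u_ij,
   extends to its closure; density of the span is a partition-of-unity argument on the circle. *)

lemma scaleC_zero_left [simp]: "0 *\<^sub>C x = 0"
  using scaleC_add_left[of 0 0 x] by simp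

lemma scaleC_zero_right [simp]: "c *\<^sub>C 0 = 0"
  using scaleC_add_right[of c 0 0] by simp

lemma scaleC_minus_left: "(- c) *\<^sub>C x = - (c *\<^sub>C x)"
  using scaleC_add_left[of c "-c" x] by (simp add: eq_neg_iff_add_eq_0 add.commute)

lemma scaleC_sum_right: "c *\<^sub>C (\<Sum>k\<in>A. f k) = (\<Sum>k\<in>A. c *\<^sub>C f k)"
  by (induction A rule: infinite_finite_induct) (auto simp: scaleC_add_right)

lemma adj_one [simp]: "adj 1 = (1::'a::cstar_algebra)"
  using adj_mult[of 1 "adj (1::'a)"] by (simp add: adj_adj)

lemma adj_scaleR: "adj (r *\<^sub>R x) = r *\<^sub>R adj x"
  by (simp add: scaleR_scaleC adj_scaleC)

lemma adj_power: "adj (x ^ k) = adj x ^ k"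
  by (induction k) (simp_all add: adj_mult power_commutes)

lemma norm_le_norm_adj: "norm x \<le> norm (adj x)"
proof (cases "x = 0")
  case False
  have "norm x * norm x \<le> norm (adj x) * norm x"
    using cstar_identity[of x] norm_mult_ineq[of "adj x" x] by simp
  then show ?thesis using False by simp
qed simp

lemma norm_adj [simp]: "norm (adj x) = norm x"
  using norm_le_norm_adj[of x] norm_le_norm_adj[of "adj x"] by (simp add: adj_adj)

lemma bounded_linear_adj: "bounded_linear (adj :: 'a::cstar_algebra \<Rightarrow> 'a)"
  by (rule bounded_linear_intro[where K=1]) (auto simp: adj_add adj_scaleR)

lemma bounded_bilinear_scaleC: "bounded_bilinear (scaleC :: complex \<Rightarrow> 'a::cstar_algebra \<Rightarrow> 'a)"
proof
  show "(a + a') *\<^sub>C b = a *\<^sub>C b + a' *\<^sub>C b" for a a' and b :: 'a by (rule scaleC_add_left)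
  show "a *\<^sub>C (b + b') = a *\<^sub>C b + a *\<^sub>C b'" for a and b b' :: 'a by (rule scaleC_add_right)
  show "(r *\<^sub>R a) *\<^sub>C b = r *\<^sub>R (a *\<^sub>C b)" for r a and b :: 'a
    by (simp add: scaleR_scaleC scaleC_scaleC scaleR_conv_of_real)
  show "a *\<^sub>C (r *\<^sub>R b) = r *\<^sub>R (a *\<^sub>C b)" for r a and b :: 'a
    by (simp add: scaleR_scaleC scaleC_scaleC mult.commute)
  show "\<exists>K. \<forall>a (b::'a). norm (a *\<^sub>C b) \<le> norm a * norm b * K"
    by (rule exI[of _ 1]) (simp add: norm_scaleC)
qed

lemma unital_star_hom_add: "unital_star_hom \<phi> \<Longrightarrow> \<phi> (x + y) = \<phi> x + \<phi> y"
  and unital_star_hom_scaleC: "unital_star_hom \<phi> \<Longrightarrow> \<phi> (c *\<^sub>C x) = c *\<^sub>C \<phi> x"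
  and unital_star_hom_mult: "unital_star_hom \<phi> \<Longrightarrow> \<phi> (x * y) = \<phi> x * \<phi> y"
  and unital_star_hom_adj: "unital_star_hom \<phi> \<Longrightarrow> \<phi> (adj x) = adj (\<phi> x)"
  and unital_star_hom_one: "unital_star_hom \<phi> \<Longrightarrow> \<phi> 1 = 1"
  by (simp_all add: unital_star_hom_def)

lemma unital_star_hom_zero: "unital_star_hom \<phi> \<Longrightarrow> \<phi> 0 = 0"
  using unital_star_hom_add[of \<phi> 0 0] by simp

lemma unital_star_hom_diff: "unital_star_hom \<phi> \<Longrightarrow> \<phi> (x - y) = \<phi> x - \<phi> y"
  using unital_star_hom_add[of \<phi> "x - y" y] by (simp add: eq_diff_eq)

lemma unital_star_hom_scaleR: "unital_star_hom \<phi> \<Longrightarrow> \<phi> (r *\<^sub>R x) = r *\<^sub>R \<phi> x"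
  by (simp add: scaleR_scaleC unital_star_hom_scaleC)

lemma unital_star_hom_sum: "unital_star_hom \<phi> \<Longrightarrow> \<phi> (\<Sum>k\<in>A. f k) = (\<Sum>k\<in>A. \<phi> (f k))"
  by (induction A rule: infinite_finite_induct) (auto simp: unital_star_hom_add unital_star_hom_zero)

lemma unital_star_hom_comp:
  "unital_star_hom \<phi> \<Longrightarrow> unital_star_hom \<psi> \<Longrightarrow> unital_star_hom (\<lambda>x. \<phi> (\<psi> x))"
  by (simp add: unital_star_hom_def)

lemma unital_star_hom_id: "unital_star_hom (\<lambda>x. x)"
  by (simp add: unital_star_hom_def)

section \<open>Unital *-homomorphisms are contractive\<close>

text \<open>The binomial series of \<open>(1 - x)\<^bsup>1/2\<^esup>\<close>; that it squares to \<open>1 - x\<close> is Vandermonde's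
  identity for \<open>1/2 + 1/2 = 1\<close>.\<close>

definition sqrt_one_minus_coeff :: "nat \<Rightarrow> real" where
  "sqrt_one_minus_coeff k = (-1) ^ k * ((1/2) gchoose k)"

definition sqrt_one_minus :: "'a::{real_normed_algebra_1,banach} \<Rightarrow> 'a" where
  "sqrt_one_minus s = (\<Sum>k. sqrt_one_minus_coeff k *\<^sub>R s ^ k)"

lemma abs_gbinomial_half_le_1: "\<bar>(1/2::real) gchoose k\<bar> \<le> 1"
proof (induction k)
  case (Suc k)
  have rec: "real (Suc k) * ((1/2::real) gchoose (Suc k)) = (1/2 - real k) * ((1/2) gchoose k)"
    using gbinomial_mult_1[of "1/2::real" k] by (simp add: algebra_simps)
  have "\<bar>(1/2 - real k) * ((1/2) gchoose k)\<bar> \<le> real (Suc k) * 1"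
    unfolding abs_mult using Suc.IH by (intro mult_mono) auto
  then have "real (Suc k) * \<bar>(1/2::real) gchoose (Suc k)\<bar> \<le> real (Suc k) * 1"
    using rec by (metis abs_mult abs_of_nat)
  then show ?case by (simp del: of_nat_Suc)
qed simp

lemma summable_norm_sqrt_one_minus:
  fixes s :: "'a::{real_normed_algebra_1,banach}"
  assumes "norm s < 1"
  shows "summable (\<lambda>k. norm (sqrt_one_minus_coeff k *\<^sub>R s ^ k))"
proof (rule summable_comparison_test)
  have "norm (sqrt_one_minus_coeff k *\<^sub>R s ^ k) \<le> 1 * norm s ^ k" for k
    unfolding norm_scaleR sqrt_one_minus_coeff_def abs_mult
    by (intro mult_mono) (auto simp: abs_gbinomial_half_le_1 norm_power_ineq)
  then show "\<exists>N. \<forall>k\<ge>N. norm (norm (sqrt_one_minus_coeff k *\<^sub>R s ^ k)) \<le> norm s ^ k"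
    by (intro exI[of _ 0]) simp
  show "summable (\<lambda>k. norm s ^ k)"
    using assms by (simp add: summable_geometric)
qed

lemma sqrt_one_minus_coeff_convolution:
  "(\<Sum>i\<le>k. sqrt_one_minus_coeff i * sqrt_one_minus_coeff (k - i))
     = (if k = 0 then 1 else if k = 1 then -1 else 0)"
proof -
  have "(\<Sum>i\<le>k. sqrt_one_minus_coeff i * sqrt_one_minus_coeff (k - i))
      = (\<Sum>i\<in>{0..k}. (-1) ^ k * (((1/2::real) gchoose i) * ((1/2) gchoose (k - i))))"
  proof (rule sum.cong)
    fix i assume "i \<in> {0..k}"
    then have "(-1::real) ^ i * (-1) ^ (k - i) = (-1) ^ k" by (simp add: power_add[symmetric])
    then show "sqrt_one_minus_coeff i * sqrt_one_minus_coeff (k - i)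
        = (-1) ^ k * (((1/2::real) gchoose i) * ((1/2) gchoose (k - i)))"
      unfolding sqrt_one_minus_coeff_def by (metis mult.assoc mult.left_commute)
  qed (auto simp: atLeast0AtMost)
  also have "\<dots> = (-1) ^ k * ((1::real) gchoose k)"
    by (simp add: sum_distrib_left[symmetric] gbinomial_Vandermonde)
  also have "\<dots> = (if k = 0 then 1 else if k = 1 then -1 else 0)"
    using binomial_gbinomial[of 1 k, where 'a=real] by (auto simp: binomial_eq_0)
  finally show ?thesis .
qed

lemma sqrt_one_minus_square:
  fixes s :: "'a::{real_normed_algebra_1,banach}"
  assumes "norm s < 1"
  shows "sqrt_one_minus s * sqrt_one_minus s = 1 - s"
proof -
  define t where "t k = sqrt_one_minus_coeff k *\<^sub>R s ^ k" for k
  have "(\<lambda>k. \<Sum>i\<le>k. t i * t (k - i)) sums (sqrt_one_minus s * sqrt_one_minus s)"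
    unfolding sqrt_one_minus_def t_def
    by (intro Cauchy_product_sums summable_norm_sqrt_one_minus assms)
  moreover have "(\<Sum>i\<le>k. t i * t (k - i)) = (if k = 0 then 1 else if k = 1 then - s else 0)" for k
  proof -
    have "(\<Sum>i\<le>k. t i * t (k - i))
        = (\<Sum>i\<le>k. sqrt_one_minus_coeff i * sqrt_one_minus_coeff (k - i)) *\<^sub>R s ^ k"
      by (auto simp: t_def scaleR_sum_left power_add[symmetric] intro!: sum.cong)
    then show ?thesis by (simp add: sqrt_one_minus_coeff_convolution)
  qed
  moreover have "(\<lambda>k. if k = 0 then 1 else if k = 1 then - s else 0) sums (1 - s)"
    using sums_finite[of "{0, 1}" "\<lambda>k. if k = 0 then 1 else if k = 1 then - s else 0"] by simp
  ultimately show ?thesis by (simp add: sums_unique2)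
qed

lemma sqrt_one_minus_commute:
  fixes s :: "'a::{real_normed_algebra_1,banach}"
  assumes "norm s < 1" and "s * h = h * s"
  shows "sqrt_one_minus s * h = h * sqrt_one_minus s"
proof -
  have sum: "summable (\<lambda>k. sqrt_one_minus_coeff k *\<^sub>R s ^ k)"
    by (rule summable_norm_cancel[OF summable_norm_sqrt_one_minus[OF assms(1)]])
  have "sqrt_one_minus s * h = (\<Sum>k. sqrt_one_minus_coeff k *\<^sub>R s ^ k * h)"
    unfolding sqrt_one_minus_def by (rule suminf_mult2[OF sum])
  also have "\<dots> = (\<Sum>k. h * (sqrt_one_minus_coeff k *\<^sub>R s ^ k))"
    by (simp add: power_commuting_commutes[OF assms(2)])
  also have "\<dots> = h * sqrt_one_minus s"
    unfolding sqrt_one_minus_def by (rule suminf_mult[OF sum])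
  finally show ?thesis .
qed

lemma adj_sqrt_one_minus:
  fixes s :: "'a::cstar_algebra"
  assumes "norm s < 1" and "adj s = s"
  shows "adj (sqrt_one_minus s) = sqrt_one_minus s"
  using bounded_linear.suminf[OF bounded_linear_adj
      summable_norm_cancel[OF summable_norm_sqrt_one_minus[OF assms(1)]]]
  by (simp add: sqrt_one_minus_def adj_scaleR adj_power assms(2))

text \<open>\<open>a + i b\<close> is unitary, hence of norm 1, and \<open>a\<close> is its real part.\<close>

lemma norm_le_1_if_sum_squares_eq_1:
  fixes a b :: "'a::cstar_algebra"
  assumes ab: "a * a + b * b = 1" and sa: "adj a = a" and sb: "adj b = b" and comm: "a * b = b * a"
  shows "norm a \<le> 1"
proof -
  define c where "c = a + \<i> *\<^sub>C b"
  have adjc: "adj c = a + (- \<i>) *\<^sub>C b"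
    by (simp add: c_def adj_add adj_scaleC sa sb)
  have "adj c * c = (a + (- \<i>) *\<^sub>C b) * (a + \<i> *\<^sub>C b)"
    using adjc by (simp add: c_def)
  also have "\<dots> = a * a + a * (\<i> *\<^sub>C b) + ((- \<i>) *\<^sub>C b) * a + ((- \<i>) *\<^sub>C b) * (\<i> *\<^sub>C b)"
    by (simp only: distrib_left distrib_right add_ac)
  also have "\<dots> = a * a + \<i> *\<^sub>C (a * b) + (- \<i>) *\<^sub>C (b * a) + (\<i> * (- \<i>)) *\<^sub>C (b * b)"
    by (simp only: mult_scaleC_left mult_scaleC_right scaleC_scaleC)
  also have "\<dots> = 1"
    by (simp add: comm scaleC_minus_left scaleC_one ab)
  finally have "(norm c)\<^sup>2 = 1" using cstar_identity[of c] by (simp add: power2_eq_square)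
  then have nc: "norm c = 1" using norm_ge_zero[of c] by (auto simp: power2_eq_1_iff)
  have "2 *\<^sub>R a = c + adj c"
    using adjc by (simp add: c_def scaleR_2 scaleC_minus_left)
  then have "norm (2 *\<^sub>R a) \<le> norm c + norm (adj c)"
    by (metis norm_triangle_ineq)
  then show ?thesis using nc by simp
qed

lemma norm_unital_star_hom_self_adjoint_le_1:
  fixes \<phi> :: "'a::cstar_algebra \<Rightarrow> 'b::cstar_algebra"
  assumes hom: "unital_star_hom \<phi>" and sa: "adj h = h" and nh: "norm h < 1"
  shows "norm (\<phi> h) \<le> 1"
proof -
  have "norm (h * h) \<le> norm h * norm h" by (rule norm_mult_ineq)
  also have "\<dots> \<le> norm h" using nh by (intro mult_left_le_one_le) simp_all
  finally have ns: "norm (h * h) < 1" using nh by simp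
  define y where "y = sqrt_one_minus (h * h)"
  have y: "h * h + y * y = 1" "adj y = y" "y * h = h * y"
    unfolding y_def
    by (simp_all add: sqrt_one_minus_square[OF ns] adj_sqrt_one_minus[OF ns] adj_mult sa
        sqrt_one_minus_commute[OF ns, of h] mult.assoc)
  show ?thesis
  proof (rule norm_le_1_if_sum_squares_eq_1[where b="\<phi> y"])
    show "\<phi> h * \<phi> h + \<phi> y * \<phi> y = 1"
      using y(1) hom by (metis unital_star_hom_add unital_star_hom_mult unital_star_hom_one)
    show "adj (\<phi> h) = \<phi> h" "adj (\<phi> y) = \<phi> y"
      using hom sa y(2) by (metis unital_star_hom_adj)+
    show "\<phi> h * \<phi> y = \<phi> y * \<phi> h" using hom y(3) by (metis unital_star_hom_mult)
  qed
qed

lemma norm_unital_star_hom_self_adjoint_le: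
  fixes \<phi> :: "'a::cstar_algebra \<Rightarrow> 'b::cstar_algebra"
  assumes hom: "unital_star_hom \<phi>" and sa: "adj h = h"
  shows "norm (\<phi> h) \<le> norm h"
proof (rule dense_ge)
  fix t :: real
  assume t: "norm h < t"
  then have tp: "t > 0" using norm_ge_zero[of h] by linarith
  have "norm (\<phi> ((1/t) *\<^sub>R h)) \<le> 1"
    using tp t by (intro norm_unital_star_hom_self_adjoint_le_1[OF hom]) (simp_all add: adj_scaleR sa)
  then show "norm (\<phi> h) \<le> t"
    using tp by (simp add: unital_star_hom_scaleR[OF hom] field_simps)
qed

lemma norm_unital_star_hom_le:
  fixes \<phi> :: "'a::cstar_algebra \<Rightarrow> 'b::cstar_algebra"
  assumes hom: "unital_star_hom \<phi>"
  shows "norm (\<phi> x) \<le> norm x"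
proof -
  have "norm (\<phi> x) * norm (\<phi> x) = norm (\<phi> (adj x * x))"
    using hom by (simp add: cstar_identity unital_star_hom_mult unital_star_hom_adj)
  also have "\<dots> \<le> norm (adj x * x)"
    by (rule norm_unital_star_hom_self_adjoint_le[OF hom]) (simp add: adj_mult adj_adj)
  also have "\<dots> = norm x * norm x" by (simp add: cstar_identity)
  finally have "(norm (\<phi> x))\<^sup>2 \<le> (norm x)\<^sup>2" by (simp add: power2_eq_square)
  then show ?thesis by (rule power2_le_imp_le) simp
qed

lemma norm_unital_star_hom_diff_le:
  fixes \<phi> :: "'a::cstar_algebra \<Rightarrow> 'b::cstar_algebra"
  assumes "unital_star_hom \<phi>"
  shows "norm (\<phi> x - \<phi> y) \<le> norm (x - y)"
  using norm_unital_star_hom_le[OF assms, of "x - y"] by (simp add: unital_star_hom_diff[OF assms])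

lemma continuous_on_unital_star_hom:
  fixes \<phi> :: "'a::cstar_algebra \<Rightarrow> 'b::cstar_algebra"
  assumes "unital_star_hom \<phi>"
  shows "continuous_on S \<phi>"
proof -
  have "bounded_linear \<phi>"
    by (rule bounded_linear_intro[where K=1])
       (use assms in \<open>auto simp: unital_star_hom_add unital_star_hom_scaleR norm_unital_star_hom_le\<close>)
  then show ?thesis by (simp add: linear_continuous_on)
qed

lemma unital_star_hom_eqI_dense:
  fixes \<phi> \<psi> :: "'a::cstar_algebra \<Rightarrow> 'b::cstar_algebra"
  assumes hom: "unital_star_hom \<phi>" "unital_star_hom \<psi>"
    and dense: "closure (star_alg_gen G) = UNIV" and eq: "\<forall>x\<in>G. \<phi> x = \<psi> x"
  shows "\<phi> a = \<psi> a"
proof -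
  have "star_alg_gen G \<subseteq> {x. \<phi> x = \<psi> x}"
  proof
    fix x assume "x \<in> star_alg_gen G"
    then show "x \<in> {x. \<phi> x = \<psi> x}"
      by induction
         (use eq hom in \<open>simp_all add: unital_star_hom_one unital_star_hom_add
            unital_star_hom_mult unital_star_hom_scaleC unital_star_hom_adj\<close>)
  qed
  moreover have "closed {x. \<phi> x = \<psi> x}"
    by (intro closed_Collect_eq continuous_on_unital_star_hom hom)
  ultimately have "closure (star_alg_gen G) \<subseteq> {x. \<phi> x = \<psi> x}"
    by (rule closure_minimal)
  then show ?thesis using dense by auto
qed

section \<open>Pointwise continuous families of homomorphisms\<close>

lemma continuous_on_star_alg_gen_family:
  fixes \<Phi> :: "'b::topological_space \<Rightarrow> 'a::cstar_algebra \<Rightarrow> 'a"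
  assumes hom: "\<forall>z\<in>S. unital_star_hom (\<Phi> z)"
    and gen_cont: "\<forall>g\<in>G. continuous_on S (\<lambda>z. \<Phi> z g)"
    and x: "x \<in> star_alg_gen G"
  shows "continuous_on S (\<lambda>z. \<Phi> z x)"
  using x
proof induction
  case (gen x)
  then show ?case using gen_cont by blast
next
  case one
  show ?case
    by (rule continuous_on_eq[OF continuous_on_const]) (simp add: hom unital_star_hom_one)
next
  case (add x y)
  show ?case
    by (rule continuous_on_eq[OF continuous_on_add[OF add.IH]]) (simp add: hom unital_star_hom_add)
next
  case (mult x y)
  show ?case
    by (rule continuous_on_eq[OF continuous_on_mult[OF mult.IH]]) (simp add: hom unital_star_hom_mult)
next
  case (scale x c)
  show ?case
    by (rule continuous_on_eq[OF bounded_bilinear.continuous_on[OF bounded_bilinear_scaleC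
          continuous_on_const scale.IH]])
       (simp add: hom unital_star_hom_scaleC)
next
  case (adj x)
  show ?case
    by (rule continuous_on_eq[OF bounded_linear.continuous_on[OF bounded_linear_adj adj.IH]])
       (simp add: hom unital_star_hom_adj)
qed

lemma continuous_on_family_closure:
  fixes \<Phi> :: "'b::topological_space \<Rightarrow> 'a::real_normed_vector \<Rightarrow> 'c::real_normed_vector"
  assumes lip: "\<forall>z\<in>S. \<forall>x y. norm (\<Phi> z x - \<Phi> z y) \<le> norm (x - y)"
    and cont: "\<forall>b\<in>D. continuous_on S (\<lambda>z. \<Phi> z b)"
    and a: "a \<in> closure D"
  shows "continuous_on S (\<lambda>z. \<Phi> z a)"
proof -
  have lip_dist: "dist (\<Phi> z x) (\<Phi> z y) \<le> dist x y" if "z \<in> S" for z x y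
    using lip that by (simp add: dist_norm)
  obtain b where b: "\<forall>k. b k \<in> D" "b \<longlonglongrightarrow> a"
    using a by (auto simp: closure_sequential)
  have "uniform_limit S (\<lambda>k z. \<Phi> z (b k)) (\<lambda>z. \<Phi> z a) sequentially"
    unfolding uniform_limit_iff
  proof (intro allI impI)
    fix e :: real assume "e > 0"
    with b(2) have "eventually (\<lambda>k. dist (b k) a < e) sequentially"
      by (rule tendstoD)
    then show "eventually (\<lambda>k. \<forall>z\<in>S. dist (\<Phi> z (b k)) (\<Phi> z a) < e) sequentially"
      by eventually_elim (use lip_dist in \<open>blast intro: le_less_trans\<close>)
  qed
  then show ?thesis
    by (rule uniform_limit_theorem[rotated]) (use b(1) cont in auto)
qed

lemma continuous_on_family_apply:
  fixes \<Phi> :: "'b::topological_space \<Rightarrow> 'a::real_normed_vector \<Rightarrow> 'c::real_normed_vector"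
  assumes lip: "\<forall>z\<in>S. \<forall>x y. norm (\<Phi> z x - \<Phi> z y) \<le> norm (x - y)"
    and cont: "\<forall>a. continuous_on S (\<lambda>z. \<Phi> z a)"
    and f: "continuous_on S f"
  shows "continuous_on S (\<lambda>z. \<Phi> z (f z))"
  unfolding continuous_on_def
proof
  fix w assume w: "w \<in> S"
  have "((\<lambda>z. \<Phi> z (f z) - \<Phi> z (f w)) \<longlongrightarrow> 0) (at w within S)"
  proof (rule Lim_null_comparison)
    show "eventually (\<lambda>z. norm (\<Phi> z (f z) - \<Phi> z (f w)) \<le> norm (f z - f w)) (at w within S)"
      using lip by (auto simp: eventually_at_filter)
    show "((\<lambda>z. norm (f z - f w)) \<longlongrightarrow> 0) (at w within S)"
      using f w unfolding continuous_on_def by (intro tendsto_norm_zero) (simp add: LIM_zero)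
  qed
  moreover have "((\<lambda>z. \<Phi> z (f w)) \<longlongrightarrow> \<Phi> w (f w)) (at w within S)"
    using cont w unfolding continuous_on_def by blast
  ultimately have "((\<lambda>z. (\<Phi> z (f z) - \<Phi> z (f w)) + \<Phi> z (f w)) \<longlongrightarrow> 0 + \<Phi> w (f w)) (at w within S)"
    by (rule tendsto_add)
  then show "((\<lambda>z. \<Phi> z (f z)) \<longlongrightarrow> \<Phi> w (f w)) (at w within S)"
    by simp
qed

section \<open>Uniform approximation by finite sums on compact sets\<close>

lemma compact_partition_of_unity:
  fixes K :: "'a::metric_space set"
  assumes "compact K" and "\<delta> > 0"
  obtains m :: nat and t :: "nat \<Rightarrow> 'a" and p :: "nat \<Rightarrow> 'a \<Rightarrow> real"
  where "\<forall>k<m. t k \<in> K \<and> continuous_on K (p k)"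
    and "\<forall>k<m. \<forall>z\<in>K. 0 \<le> p k z \<and> (\<delta> \<le> dist z (t k) \<longrightarrow> p k z = 0)"
    and "\<forall>z\<in>K. (\<Sum>k<m. p k z) = 1"
proof -
  have "K \<subseteq> (\<Union>x\<in>K. ball x \<delta>)" using assms(2) by auto
  then obtain T where T: "T \<subseteq> K" "finite T" "K \<subseteq> (\<Union>x\<in>T. ball x \<delta>)"
    using compactE_image[OF assms(1), of K "\<lambda>x. ball x \<delta>"] by blast
  obtain xs where xs: "set xs = T" using finite_list[OF T(2)] by blast
  define t where "t k = xs ! k" for k
  define m where "m = length xs"
  define bump where "bump k z = max 0 (\<delta> - dist z (t k))" for k z
  define H where "H z = (\<Sum>k<m. bump k z)" for z
  have H_pos: "H z > 0" if z: "z \<in> K" for z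
  proof -
    obtain x where "x \<in> T" "dist z x < \<delta>"
      using T(3) z by (auto simp: dist_commute)
    moreover obtain k where "k < m" "t k = x"
      using \<open>x \<in> T\<close> by (auto simp: xs[symmetric] in_set_conv_nth t_def m_def)
    ultimately show ?thesis
      unfolding H_def by (intro sum_pos2[of _ k]) (auto simp: bump_def)
  qed
  have bump_cont: "continuous_on K (bump k)" for k
    unfolding bump_def by (intro continuous_intros)
  have "continuous_on K H"
    unfolding H_def by (intro continuous_on_sum bump_cont)
  then have "continuous_on K (\<lambda>z. bump k z / H z)" for k
    by (intro continuous_on_divide bump_cont) (auto dest: H_pos)
  show ?thesis
  proof
    show "\<forall>k<m. t k \<in> K \<and> continuous_on K (\<lambda>z. bump k z / H z)"
      using T(1) \<open>\<And>k. continuous_on K (\<lambda>z. bump k z / H z)\<close>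
      by (auto simp: t_def m_def xs[symmetric])
    show "\<forall>k<m. \<forall>z\<in>K. 0 \<le> bump k z / H z \<and> (\<delta> \<le> dist z (t k) \<longrightarrow> bump k z / H z = 0)"
      using H_pos by (auto simp: bump_def less_imp_le)
    show "\<forall>z\<in>K. (\<Sum>k<m. bump k z / H z) = 1"
      using H_pos by (simp add: sum_divide_distrib[symmetric] flip: H_def) (metis less_irrefl)
  qed
qed

lemma continuous_on_compact_approx_finite_sum:
  fixes F :: "'a::metric_space \<Rightarrow> 'b::real_normed_vector"
  assumes K: "compact K" and F: "continuous_on K F" and \<epsilon>: "\<epsilon> > 0"
  obtains m :: nat and p :: "nat \<Rightarrow> 'a \<Rightarrow> real" and c :: "nat \<Rightarrow> 'b"
  where "\<forall>k<m. continuous_on K (p k)"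
    and "\<forall>z\<in>K. norm (F z - (\<Sum>k<m. p k z *\<^sub>R c k)) < \<epsilon>"
proof -
  have "uniformly_continuous_on K F"
    by (rule compact_uniformly_continuous[OF F K])
  moreover have "\<epsilon>/2 > 0" using \<epsilon> by simp
  ultimately obtain \<delta> where \<delta>: "\<delta> > 0"
    "\<And>x y. x \<in> K \<Longrightarrow> y \<in> K \<Longrightarrow> dist y x < \<delta> \<Longrightarrow> dist (F y) (F x) < \<epsilon>/2"
    unfolding uniformly_continuous_on_def by metis
  obtain m t and p :: "nat \<Rightarrow> 'a \<Rightarrow> real" where p: "\<forall>k<m. t k \<in> K \<and> continuous_on K (p k)"
    "\<forall>k<m. \<forall>z\<in>K. 0 \<le> p k z \<and> (\<delta> \<le> dist z (t k) \<longrightarrow> p k z = 0)"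
    "\<forall>z\<in>K. (\<Sum>k<m. p k z) = 1"
    by (rule compact_partition_of_unity[OF K \<delta>(1)])
  show ?thesis
  proof
    show "\<forall>k<m. continuous_on K (p k)" using p(1) by blast
    show "\<forall>z\<in>K. norm (F z - (\<Sum>k<m. p k z *\<^sub>R F (t k))) < \<epsilon>"
    proof
      fix z assume z: "z \<in> K"
      have term_le: "norm (p k z *\<^sub>R (F z - F (t k))) \<le> p k z * (\<epsilon>/2)" if k: "k < m" for k
      proof (cases "dist z (t k) < \<delta>")
        case True
        then have "norm (F z - F (t k)) \<le> \<epsilon>/2"
          using \<delta>(2)[of "t k" z] p(1) k z by (simp add: dist_norm)
        then have "p k z * norm (F z - F (t k)) \<le> p k z * (\<epsilon>/2)"
          using p(2) k z by (intro mult_left_mono) auto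
        then show ?thesis using p(2) k z by simp
      next
        case False
        then show ?thesis using p(2) k z by simp
      qed
      have "(\<Sum>k<m. p k z *\<^sub>R (F z - F (t k))) = (\<Sum>k<m. p k z) *\<^sub>R F z - (\<Sum>k<m. p k z *\<^sub>R F (t k))"
        by (simp add: scaleR_diff_right sum_subtractf scaleR_sum_left)
      then have "F z - (\<Sum>k<m. p k z *\<^sub>R F (t k)) = (\<Sum>k<m. p k z *\<^sub>R (F z - F (t k)))"
        using p(3) z by simp
      also have "norm \<dots> \<le> (\<Sum>k<m. p k z * (\<epsilon>/2))"
        by (rule order_trans[OF norm_sum sum_mono]) (use term_le in simp)
      also have "\<dots> = \<epsilon>/2"
        using p(3) z by (simp only: sum_distrib_right[symmetric] mult_1_left)
      finally show "norm (F z - (\<Sum>k<m. p k z *\<^sub>R F (t k))) < \<epsilon>"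
        using \<epsilon> by linarith
    qed
  qed
qed

section \<open>Actions of the circle\<close>

lemma circle_mult_cnj: "z \<in> circle \<Longrightarrow> z * cnj z = 1"
  using complex_norm_square[of z] by (simp add: circle_def)

lemma circle_cnj: "z \<in> circle \<Longrightarrow> cnj z \<in> circle"
  by (simp add: circle_def)

lemma circle_mult: "s \<in> circle \<Longrightarrow> t \<in> circle \<Longrightarrow> s * t \<in> circle"
  by (simp add: circle_def norm_mult)

lemma circle_nonzero: "z \<in> circle \<Longrightarrow> z \<noteq> 0"
  by (auto simp: circle_def)

lemma one_in_circle: "1 \<in> circle"
  by (simp add: circle_def)

lemma compact_circle: "compact circle"
proof -
  have "circle = sphere 0 1" by (auto simp: circle_def)
  then show ?thesis using compact_sphere by metis
qed

definition circle_action :: "('a::cstar_algebra \<Rightarrow> complex \<Rightarrow> 'a) \<Rightarrow> bool" where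
  "circle_action \<rho> \<longleftrightarrow> hom_into_CT \<rho> \<and> (\<forall>a. \<rho> a 1 = a) \<and>
     (\<forall>a. \<forall>s\<in>circle. \<forall>t\<in>circle. \<rho> (\<rho> a t) s = \<rho> a (s * t))"

text \<open>Writing \<open>f(z) = \<rho>\<^sub>z(F(z))\<close> with \<open>F(z) = \<rho>\<^bsub>z\<^sup>-\<^sup>1\<^esub>(f(z))\<close> reduces the claim to
  approximating the continuous function \<open>F\<close> uniformly by finite sums \<open>\<Sum>\<^sub>k p\<^sub>k(z) c\<^sub>k\<close>.\<close>

lemma circle_action_density:
  fixes \<rho> :: "'a::cstar_algebra \<Rightarrow> complex \<Rightarrow> 'a"
  assumes \<rho>: "circle_action \<rho>" and f: "continuous_on circle f" and \<epsilon>: "\<epsilon> > 0"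
  shows "\<exists>(m::nat) (g::nat \<Rightarrow> complex \<Rightarrow> complex) (a::nat \<Rightarrow> 'a).
           (\<forall>k<m. continuous_on circle (g k)) \<and>
           (\<forall>z\<in>circle. norm (f z - (\<Sum>k<m. g k z *\<^sub>C \<rho> (a k) z)) < \<epsilon>)"
proof -
  have hom: "unital_star_hom (\<lambda>a. \<rho> a z)" if "z \<in> circle" for z
    using \<rho> that by (simp add: circle_action_def hom_into_CT_def)
  have lip: "\<forall>z\<in>circle. \<forall>x y. norm (\<rho> x z - \<rho> y z) \<le> norm (x - y)"
    using hom norm_unital_star_hom_diff_le by blast
  define F where "F z = \<rho> (f z) (cnj z)" for z
  have "continuous_on circle F"
    unfolding F_def
  proof (rule continuous_on_family_apply[OF _ _ f])
    show "\<forall>z\<in>circle. \<forall>x y. norm (\<rho> x (cnj z) - \<rho> y (cnj z)) \<le> norm (x - y)"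
      using lip circle_cnj by blast
    show "\<forall>a. continuous_on circle (\<lambda>z. \<rho> a (cnj z))"
    proof
      fix a
      have "continuous_on circle (\<rho> a)"
        using \<rho> by (simp add: circle_action_def hom_into_CT_def)
      then show "continuous_on circle (\<lambda>z. \<rho> a (cnj z))"
        by (rule continuous_on_compose2[OF _ continuous_on_cnj[OF continuous_on_id]])
           (auto simp: circle_cnj)
    qed
  qed
  then obtain m and p :: "nat \<Rightarrow> complex \<Rightarrow> real" and c
    where p: "\<forall>k<m. continuous_on circle (p k)"
    and approx: "\<forall>z\<in>circle. norm (F z - (\<Sum>k<m. p k z *\<^sub>R c k)) < \<epsilon>"
    by (rule continuous_on_compact_approx_finite_sum[OF compact_circle _ \<epsilon>])
  have "norm (f z - (\<Sum>k<m. complex_of_real (p k z) *\<^sub>C \<rho> (c k) z)) < \<epsilon>" if z: "z \<in> circle" for z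
  proof -
    have "f z = \<rho> (F z) z"
      using \<rho> z circle_cnj[OF z] by (simp add: circle_action_def F_def circle_mult_cnj mult.commute)
    then have "f z - (\<Sum>k<m. complex_of_real (p k z) *\<^sub>C \<rho> (c k) z)
        = \<rho> (F z - (\<Sum>k<m. p k z *\<^sub>R c k)) z"
      by (simp add: unital_star_hom_diff[OF hom[OF z]] unital_star_hom_sum[OF hom[OF z]]
          unital_star_hom_scaleC[OF hom[OF z]] scaleR_scaleC)
    then show ?thesis
      using norm_unital_star_hom_le[OF hom[OF z]] approx z by (metis order.strict_trans1)
  qed
  then show ?thesis
    using p by (intro exI[of _ m] exI[of _ "\<lambda>k z. complex_of_real (p k z)"] exI[of _ c]) simp
qed

section \<open>The gauge action on \<open>C(U\<^sup>+\<^sub>\<zeta>(F))\<close>\<close>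

definition twist :: "complex \<Rightarrow> (nat \<Rightarrow> int) \<Rightarrow> (nat \<Rightarrow> nat \<Rightarrow> 'a::cstar_algebra) \<Rightarrow> nat \<Rightarrow> nat \<Rightarrow> 'a"
  where "twist z e M i j = z powi (e j - e i) *\<^sub>C M i j"

lemma adj_powi_scaleC_circle:
  assumes "z \<in> circle"
  shows "adj (z powi m *\<^sub>C x) = z powi (- m) *\<^sub>C adj x"
proof -
  have "cnj z = inverse z"
    using circle_mult_cnj[OF assms] circle_nonzero[OF assms] by (simp add: field_simps)
  then show ?thesis
    by (simp add: adj_scaleC power_int_inverse power_int_minus)
qed

lemma scaleC_powi_mult_circle:
  assumes "z \<in> circle"
  shows "z powi k *\<^sub>C x * z powi l *\<^sub>C y = z powi (k + l) *\<^sub>C (x * y)"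
  using circle_nonzero[OF assms]
  by (simp add: mult_scaleC_left mult_scaleC_right scaleC_scaleC power_int_add mult.commute)

lemma unitary_mat_twist:
  assumes z: "z \<in> circle" and U: "unitary_mat n M"
  shows "unitary_mat n (twist z e M)"
  unfolding unitary_mat_def
proof (intro ballI conjI)
  fix i j assume ij: "i \<in> {1..n}" "j \<in> {1..n}"
  have "(\<Sum>k=1..n. adj (twist z e M k i) * twist z e M k j)
      = z powi (e j - e i) *\<^sub>C (\<Sum>k=1..n. adj (M k i) * M k j)"
    by (simp add: twist_def adj_powi_scaleC_circle[OF z] scaleC_powi_mult_circle[OF z]
        scaleC_sum_right)
  then show "(\<Sum>k=1..n. adj (twist z e M k i) * twist z e M k j) = (if i = j then 1 else 0)"
    using U ij by (simp add: unitary_mat_def scaleC_one)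
  have "(\<Sum>k=1..n. twist z e M i k * adj (twist z e M j k))
      = z powi (e j - e i) *\<^sub>C (\<Sum>k=1..n. M i k * adj (M j k))"
    by (simp add: twist_def adj_powi_scaleC_circle[OF z] scaleC_powi_mult_circle[OF z]
        scaleC_sum_right)
  then show "(\<Sum>k=1..n. twist z e M i k * adj (twist z e M j k)) = (if i = j then 1 else 0)"
    using U ij by (simp add: unitary_mat_def scaleC_one)
qed

lemma unitary_mat_cong:
  assumes "\<And>i j. i \<in> {1..n} \<Longrightarrow> j \<in> {1..n} \<Longrightarrow> M i j = M' i j"
  shows "unitary_mat n M = unitary_mat n M'"
proof -
  have "\<forall>i\<in>{1..n}. \<forall>j\<in>{1..n}.
      (\<Sum>k=1..n. adj (M k i) * M k j) = (\<Sum>k=1..n. adj (M' k i) * M' k j) \<and>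
      (\<Sum>k=1..n. M i k * adj (M j k)) = (\<Sum>k=1..n. M' i k * adj (M' j k))"
    using assms by (auto intro!: sum.cong)
  then show ?thesis unfolding unitary_mat_def by auto
qed

lemma ubar_twist:
  assumes "z \<in> circle"
  shows "ubar \<zeta> d (twist z d u) k l = z powi (d k - d l) *\<^sub>C ubar \<zeta> d u k l"
  by (simp add: ubar_def twist_def adj_powi_scaleC_circle[OF assms] scaleC_scaleC mult.commute)

lemma conj_mat_ubar_twist:
  assumes z: "z \<in> circle" and adm: "admissible n F Finv d d' dd"
    and ij: "i \<in> {1..n}" "j \<in> {1..n}"
  shows "conj_mat n F Finv (ubar \<zeta> d (twist z d u)) i j
    = twist z d' (conj_mat n F Finv (ubar \<zeta> d u)) i j"
proof -
  have "(F i k * Finv l j) *\<^sub>C ubar \<zeta> d (twist z d u) k l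
      = z powi (d' j - d' i) *\<^sub>C ((F i k * Finv l j) *\<^sub>C ubar \<zeta> d u k l)"
    if kl: "k \<in> {1..n}" "l \<in> {1..n}" for k l
  proof (cases "F i k = 0 \<or> Finv l j = 0")
    case False
    then have "d' i = dd - d k" "d' j = dd - d l"
      using adm ij kl unfolding admissible_def by force+
    then show ?thesis
      by (simp add: ubar_twist[OF z] scaleC_scaleC mult.commute)
  qed auto
  then show ?thesis
    by (simp add: conj_mat_def twist_def scaleC_sum_right)
qed

lemma UF_relations_twist:
  assumes z: "z \<in> circle" and adm: "admissible n F Finv d d' dd"
    and rel: "UF_relations n \<zeta> d F Finv u"
  shows "UF_relations n \<zeta> d F Finv (twist z d u)"
proof -
  have "unitary_mat n (twist z d' (conj_mat n F Finv (ubar \<zeta> d u)))"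
    using rel unitary_mat_twist[OF z] unfolding UF_relations_def by blast
  then have "unitary_mat n (conj_mat n F Finv (ubar \<zeta> d (twist z d u)))"
    using unitary_mat_cong conj_mat_ubar_twist[OF z adm] by blast
  moreover have "unitary_mat n (twist z d u)"
    using rel unitary_mat_twist[OF z] unfolding UF_relations_def by blast
  ultimately show ?thesis by (simp add: UF_relations_def)
qed

lemma is_C_UplusF_hom_eqI:
  assumes C: "is_C_UplusF n \<zeta> d F Finv u"
    and hom: "unital_star_hom \<phi>" "unital_star_hom \<psi>"
    and eq: "\<forall>i\<in>{1..n}. \<forall>j\<in>{1..n}. \<phi> (u i j) = \<psi> (u i j)"
  shows "\<phi> a = \<psi> a"
  using C eq by (intro unital_star_hom_eqI_dense[OF hom]) (auto simp: is_C_UplusF_def)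

lemma is_C_UplusF_twist_hom:
  assumes C: "is_C_UplusF n \<zeta> d F Finv u" and adm: "admissible n F Finv d d' dd"
    and z: "z \<in> circle"
  shows "\<exists>\<phi>. unital_star_hom \<phi> \<and>
    (\<forall>i\<in>{1..n}. \<forall>j\<in>{1..n}. \<phi> (u i j) = z powi (d j - d i) *\<^sub>C u i j)"
  using C UF_relations_twist[OF z adm] unfolding is_C_UplusF_def twist_def by blast

lemma continuous_on_powi_scaleC_circle: "continuous_on circle (\<lambda>z. z powi m *\<^sub>C x)"
  by (intro bounded_bilinear.continuous_on[OF bounded_bilinear_scaleC] continuous_on_const
      continuous_on_power_int continuous_on_id) (auto dest: circle_nonzero)

lemma is_C_UplusF_gauge_action:
  assumes C: "is_C_UplusF n \<zeta> d F Finv u" and adm: "admissible n F Finv d d' dd"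
  shows "\<exists>\<rho>. circle_action \<rho> \<and>
    (\<forall>i\<in>{1..n}. \<forall>j\<in>{1..n}. \<forall>z\<in>circle. \<rho> (u i j) z = z powi (d j - d i) *\<^sub>C u i j)"
proof -
  define G where "G = {u i j |i j. i \<in> {1..n} \<and> j \<in> {1..n}}"
  define \<Phi> where "\<Phi> z = (SOME \<phi>. unital_star_hom \<phi> \<and>
      (\<forall>i\<in>{1..n}. \<forall>j\<in>{1..n}. \<phi> (u i j) = z powi (d j - d i) *\<^sub>C u i j))" for z
  have \<Phi>: "unital_star_hom (\<Phi> z) \<and> (\<forall>i\<in>{1..n}. \<forall>j\<in>{1..n}. \<Phi> z (u i j) = z powi (d j - d i) *\<^sub>C u i j)"
    if "z \<in> circle" for z
    unfolding \<Phi>_def by (rule someI_ex[OF is_C_UplusF_twist_hom[OF C adm that]])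
  then have hom: "\<forall>z\<in>circle. unital_star_hom (\<Phi> z)" by blast
  have gen: "\<forall>g\<in>G. continuous_on circle (\<lambda>z. \<Phi> z g)"
    using \<Phi> continuous_on_powi_scaleC_circle by (auto simp: G_def intro: continuous_on_eq)
  have cont: "continuous_on circle (\<lambda>z. \<Phi> z a)" for a
  proof (rule continuous_on_family_closure)
    show "\<forall>z\<in>circle. \<forall>x y. norm (\<Phi> z x - \<Phi> z y) \<le> norm (x - y)"
      using hom norm_unital_star_hom_diff_le by blast
    show "\<forall>b\<in>star_alg_gen G. continuous_on circle (\<lambda>z. \<Phi> z b)"
      using continuous_on_star_alg_gen_family[OF hom gen] by blast
    show "a \<in> closure (star_alg_gen G)"
      using C by (simp add: is_C_UplusF_def G_def)
  qed
  have one: "\<Phi> 1 a = a" for a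
    using is_C_UplusF_hom_eqI[OF C hom[rule_format, OF one_in_circle] unital_star_hom_id]
      \<Phi>[OF one_in_circle] by (simp add: scaleC_one)
  have mult: "\<Phi> s (\<Phi> t a) = \<Phi> (s * t) a" if st: "s \<in> circle" "t \<in> circle" for s t a
  proof (rule is_C_UplusF_hom_eqI[OF C, where \<phi>="\<lambda>a. \<Phi> s (\<Phi> t a)" and \<psi>="\<Phi> (s * t)"])
    show "unital_star_hom (\<lambda>a. \<Phi> s (\<Phi> t a))" "unital_star_hom (\<Phi> (s * t))"
      using hom st circle_mult by (auto intro: unital_star_hom_comp)
    show "\<forall>i\<in>{1..n}. \<forall>j\<in>{1..n}. \<Phi> s (\<Phi> t (u i j)) = \<Phi> (s * t) (u i j)"
      using \<Phi> st circle_mult[OF st]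
      by (simp add: unital_star_hom_scaleC scaleC_scaleC power_int_mult_distrib mult.commute)
  qed
  show ?thesis
    using hom cont one mult \<Phi>
    by (intro exI[of _ "\<lambda>a z. \<Phi> z a"]) (simp add: circle_action_def hom_into_CT_def)
qed

theorem proposition2p17:
  fixes n :: nat and \<zeta> :: complex
    and F Finv :: "nat \<Rightarrow> nat \<Rightarrow> complex"
    and d d' :: "nat \<Rightarrow> int" and dd :: int
    and u :: "nat \<Rightarrow> nat \<Rightarrow> 'a::cstar_algebra"
  assumes zeta: "\<zeta> \<in> circle"
    and inv: "inverse_cmat n F Finv"
    and adm: "admissible n F Finv d d' dd"
    and C: "is_C_UplusF n \<zeta> d F Finv u"
  shows "\<exists>\<rho>::'a \<Rightarrow> complex \<Rightarrow> 'a.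
     \<comment> \<open>existence\<close>
     hom_into_CT \<rho> \<and>
     (\<forall>i\<in>{1..n}. \<forall>j\<in>{1..n}. \<forall>z\<in>circle. \<rho> (u i j) z = (z powi (d j - d i)) *\<^sub>C u i j) \<and>
     \<comment> \<open>uniqueness (as elements of C(T,A))\<close>
     (\<forall>\<rho>'::'a \<Rightarrow> complex \<Rightarrow> 'a. hom_into_CT \<rho>' \<and>
        (\<forall>i\<in>{1..n}. \<forall>j\<in>{1..n}. \<forall>z\<in>circle. \<rho>' (u i j) z = (z powi (d j - d i)) *\<^sub>C u i j)
        \<longrightarrow> (\<forall>a. \<forall>z\<in>circle. \<rho>' a z = \<rho> a z)) \<and>
     \<comment> \<open>coaction identity (\<rho>\<otimes>id)\<rho> = (id\<otimes>\<Delta>)\<rho>\<close>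
     (\<forall>a. \<forall>s\<in>circle. \<forall>t\<in>circle. \<rho> (\<rho> a t) s = \<rho> a (s * t)) \<and>
     \<comment> \<open>density: closed linear span of \<rho>(A)(1\<otimes>C(T)) is all of C(T,A)\<close>
     (\<forall>f::complex \<Rightarrow> 'a. continuous_on circle f \<longrightarrow>
        (\<forall>\<epsilon>>0. \<exists>(m::nat) (g::nat \<Rightarrow> complex \<Rightarrow> complex) (a::nat \<Rightarrow> 'a).
           (\<forall>k<m. continuous_on circle (g k)) \<and>
           (\<forall>z\<in>circle. norm (f z - (\<Sum>k<m. g k z *\<^sub>C \<rho> (a k) z)) < \<epsilon>)))"
proof -
  obtain \<rho> where \<rho>: "circle_action \<rho>"
    and gens: "\<forall>i\<in>{1..n}. \<forall>j\<in>{1..n}. \<forall>z\<in>circle. \<rho> (u i j) z = z powi (d j - d i) *\<^sub>C u i j"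
    using is_C_UplusF_gauge_action[OF C adm] by blast
  have unique: "\<rho>' a z = \<rho> a z"
    if "hom_into_CT \<rho>'"
      and "\<forall>i\<in>{1..n}. \<forall>j\<in>{1..n}. \<forall>z\<in>circle. \<rho>' (u i j) z = z powi (d j - d i) *\<^sub>C u i j"
      and "z \<in> circle" for \<rho>' a z
    using that \<rho> gens
    by (intro is_C_UplusF_hom_eqI[OF C]) (auto simp: circle_action_def hom_into_CT_def)
  show ?thesis
    using \<rho> gens unique circle_action_density[OF \<rho>]
    by (intro exI[of _ \<rho>]) (auto simp: circle_action_def)
qed

end
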